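(* Let $\theta,\eta\in\mathbb{R}$, $\gamma,\beta\in\mathbb{R}$. The inequality $\int_0^tu^{-\eta}[h^{-1}(1/u)]^{\gamma}(t-u)^{-\theta}[h^{-1}(1/(t-u))]^{\beta}\,du\le c\,t^{1-\eta-\theta}[h^{-1}(1/t)]^{\gamma+\beta}$ holds: (i) for all $t>0$, whenever $\beta,\gamma\ge0$, $\beta/2+1-\theta>0$ and $\gamma/2+1-\eta>0$, with $c=B(\beta/2+1-\theta,\gamma/2+1-\eta)$; (ii) if $h$ satisfies $h(r)\le C_h\lambda^{\alpha_h}h(\lambda r)$ for all $\lambda\le1$, $r\le1$ (some $\alpha_h\in(0,2]$, $C_h\ge1$), then for every $T>0$, all $t\in(0,T]$ and all $\beta,\gamma\in\mathbb{R}$ with $(\beta/2)\wedge(\beta/\alpha_h)+1-\theta>0$ and $(\gamma/2)\wedge(\gamma/\alpha_h)+1-\eta>0$, with $c=(C_h[h^{-1}(1/T)\vee1]^2)^{-(\beta\wedge0+\gamma\wedge0)/\alpha_h}\,B\big((\beta/2)\wedge(\beta/\alpha_h)+1-\theta,\,(\gamma/2)\wedge(\gamma/\alpha_h)+1-\eta\big)$.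
   Context: Let $d\in\mathbb{N}$ and let $\nu:[0,\infty)\to[0,\infty]$ be non-increasing with $\int_{\mathbb{R}^d}(1\wedge|x|^2)\nu(|x|)\,dx<\infty$. For $r>0$ let $h(r)=\int_{\mathbb{R}^d}\big(1\wedge \tfrac{|x|^2}{r^2}\big)\nu(|x|)\,dx$; assume $h(0^+)=\infty$, so $h$ is a continuous strictly decreasing bijection of $(0,\infty)$ onto $(0,\infty)$ with inverse $h^{-1}$. $B(a,b)=\int_0^1s^{a-1}(1-s)^{b-1}ds$ is the Beta function. *)

theory Defs
  imports "HOL-Analysis.Analysis"
begin

definition h_fun :: "'a::euclidean_space itself \<Rightarrow> (real \<Rightarrow> ennreal) \<Rightarrow> real \<Rightarrow> real" where
  "h_fun _ \<nu> r = enn2real (\<integral>\<^sup>+ x. ennreal (min 1 (norm (x::'a)^2 / r^2)) * \<nu> (norm x) \<partial>lborel)"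

definition h_inv :: "'a::euclidean_space itself \<Rightarrow> (real \<Rightarrow> ennreal) \<Rightarrow> real \<Rightarrow> real" where
  "h_inv T \<nu> y = (THE r. 0 < r \<and> h_fun T \<nu> r = y)"

end

theory Submission
  imports Defs
begin

text \<open>Monotonicity of \<nu> and monotone convergence make h a continuous, strictly decreasing
  bijection of (0,\<infinity>), so h_inv is a genuine inverse. Since r^2 h(r) is nondecreasing,
  h^-1(1/u)^2 \<le> h^-1(1/t)^2 u/t for u \<le> t, which bounds h^-1(1/u)^\<gamma> for \<gamma> \<ge> 0. For \<gamma> < 0 the
  lower scaling of h gives the reverse bound h^-1(1/u)^\<alpha> \<ge> h^-1(1/t)^\<alpha> u/(K t); the constant
  K = C max(h^-1(1/T), 1)^2 pays for the case h^-1 > 1, where the scaling condition is not available.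
  Either way each factor is at most a constant times h^-1(1/t)^\<gamma> (u/t)^p, and the integrand
  becomes a multiple of u^(P-1) (t - u)^(Q-1), whose integral over (0,t) is t^(P+Q-1) B(P,Q).\<close>

lemma nn_integral_powr_Beta:
  fixes P Q t :: real
  assumes P: "0 < P" and Q: "0 < Q" and t: "0 < t"
  shows "(\<integral>\<^sup>+ u \<in> {0<..<t}. ennreal (u powr (P - 1) * (t - u) powr (Q - 1)) \<partial>lborel)
         = ennreal (t powr (P + Q - 1) * Beta P Q)"
proof -
  define g where "g s = s powr (P - 1) * (1 - s) powr (Q - 1)" for s :: real
  have g_integral: "(g has_integral Beta P Q) {0<..<1}"
    using has_integral_Beta_real[OF P Q] unfolding g_def by (simp add: has_integral_Icc_iff_Ioo)
  have Beta: "(\<integral>\<^sup>+ s. ennreal (g s) * indicator {0<..<1} s \<partial>lborel) = ennreal (Beta P Q)"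
    by (rule nn_integral_has_integral_lebesgue'[OF _ g_integral]) (simp add: g_def)
  define f where "f u = ennreal (u powr (P - 1) * (t - u) powr (Q - 1)) * indicator {0<..<t} u"
    for u :: real
  have f_rescaled: "f (t * s) = ennreal (t powr (P + Q - 2)) * (ennreal (g s) * indicator {0<..<1} s)"
    for s
  proof (cases "s \<in> {0<..<1}")
    case True
    have "t - t * s = t * (1 - s)"
      by (simp add: algebra_simps)
    then have "(t * s) powr (P - 1) * (t - t * s) powr (Q - 1)
        = (t powr (P - 1) * t powr (Q - 1)) * g s"
      using True t by (simp add: g_def powr_mult)
    also have "t powr (P - 1) * t powr (Q - 1) = t powr (P + Q - 2)"
      by (simp add: powr_add[symmetric])
    finally show ?thesis
      using True t unfolding f_def by (simp add: ennreal_mult' g_def)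
  next
    case False
    then have "t * s \<notin> {0<..<t}"
      using t by (auto simp: zero_less_mult_iff)
    then show ?thesis using False unfolding f_def by simp
  qed
  have "(\<integral>\<^sup>+ u. f u \<partial>lborel) = ennreal t * (\<integral>\<^sup>+ s. f (t * s) \<partial>lborel)"
    using nn_integral_real_affine[of f t 0] t unfolding f_def by simp
  also have "\<dots> = ennreal t * (ennreal (t powr (P + Q - 2)) * ennreal (Beta P Q))"
    unfolding f_rescaled by (subst nn_integral_cmult) (simp_all add: g_def Beta[unfolded g_def])
  also have "\<dots> = ennreal (t powr (P + Q - 1) * Beta P Q)"
  proof -
    have "t * t powr (P + Q - 2) = t powr (P + Q - 1)"
      using t by (simp add: powr_add[symmetric] powr_mult_base)
    moreover have "0 \<le> Beta P Q"
      using P Q by (simp add: Beta_def Gamma_real_pos less_imp_le)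
    ultimately show ?thesis
      using t by (simp add: ennreal_mult'[symmetric] mult.assoc[symmetric])
  qed
  finally show ?thesis unfolding f_def .
qed

lemma nn_integral_convolution_le_Beta:
  fixes f g :: "real \<Rightarrow> real" and t p q \<eta> \<theta> A B :: real
  assumes t: "0 < t" and P: "0 < p + 1 - \<eta>" and Q: "0 < q + 1 - \<theta>"
    and f: "\<And>u. 0 < u \<Longrightarrow> u < t \<Longrightarrow> 0 \<le> f u \<and> f u \<le> A * (u/t) powr p"
    and g: "\<And>u. 0 < u \<Longrightarrow> u < t \<Longrightarrow> 0 \<le> g u \<and> g u \<le> B * (u/t) powr q"
  shows "(\<integral>\<^sup>+ u \<in> {0<..<t}. ennreal (u powr (-\<eta>) * f u * (t - u) powr (-\<theta>) * g (t - u)) \<partial>lborel)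
      \<le> ennreal (A * B * Beta (p + 1 - \<eta>) (q + 1 - \<theta>) * t powr (1 - \<eta> - \<theta>))"
proof -
  define C where "C = A * B * t powr (- (p + q))"
  have "0 \<le> A * (1/2) powr p" "0 \<le> B * (1/2) powr q"
    using f[of "t/2"] g[of "t/2"] t by fastforce+
  then have AB: "0 \<le> A" "0 \<le> B"
    by (simp_all add: zero_le_mult_iff)
  then have C: "0 \<le> C"
    unfolding C_def by simp
  have pointwise: "u powr (-\<eta>) * f u * (t - u) powr (-\<theta>) * g (t - u)
      \<le> C * (u powr (p + 1 - \<eta> - 1) * (t - u) powr (q + 1 - \<theta> - 1))"
    if u: "0 < u" "u < t" for u
  proof -
    have "u powr (-\<eta>) * f u * (t - u) powr (-\<theta>) * g (t - u)
       \<le> u powr (-\<eta>) * (A * (u/t) powr p) * (t - u) powr (-\<theta>) * (B * ((t - u)/t) powr q)"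
      using f[OF u] g[of "t - u"] u AB by (intro mult_mono mult_nonneg_nonneg) auto
    also have "\<dots> = C * (u powr (p + 1 - \<eta> - 1) * (t - u) powr (q + 1 - \<theta> - 1))"
    proof -
      have "(u/t) powr p = u powr p * t powr (-p)" "((t - u)/t) powr q = (t - u) powr q * t powr (-q)"
        using u by (subst powr_divide; simp add: powr_minus divide_inverse)+
      moreover have "u powr (p + 1 - \<eta> - 1) = u powr (-\<eta>) * u powr p"
        "(t - u) powr (q + 1 - \<theta> - 1) = (t - u) powr (-\<theta>) * (t - u) powr q"
        "t powr (- (p + q)) = t powr (-p) * t powr (-q)"
        by (simp_all add: powr_add[symmetric])
      ultimately show ?thesis
        unfolding C_def by (simp only: ac_simps)
    qed
    finally show ?thesis .
  qed
  have "(\<integral>\<^sup>+ u \<in> {0<..<t}. ennreal (u powr (-\<eta>) * f u * (t - u) powr (-\<theta>) * g (t - u)) \<partial>lborel)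
      \<le> (\<integral>\<^sup>+ u \<in> {0<..<t}. ennreal C * ennreal (u powr (p + 1 - \<eta> - 1) * (t - u) powr (q + 1 - \<theta> - 1))
          \<partial>lborel)"
    using pointwise C
    by (intro nn_integral_mono) (auto split: split_indicator simp: ennreal_mult'[symmetric] intro: ennreal_leI)
  also have "\<dots> = ennreal C * ennreal (t powr (p + 1 - \<eta> + (q + 1 - \<theta>) - 1) * Beta (p + 1 - \<eta>) (q + 1 - \<theta>))"
    using nn_integral_powr_Beta[OF P Q t] by (simp add: nn_integral_cmult mult.assoc)
  also have "\<dots> = ennreal (A * B * Beta (p + 1 - \<eta>) (q + 1 - \<theta>) * t powr (1 - \<eta> - \<theta>))"
  proof -
    have "C * (t powr (p + 1 - \<eta> + (q + 1 - \<theta>) - 1) * Beta (p + 1 - \<eta>) (q + 1 - \<theta>))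
        = A * B * Beta (p + 1 - \<eta>) (q + 1 - \<theta>) * (t powr (- (p + q)) * t powr (p + 1 - \<eta> + (q + 1 - \<theta>) - 1))"
      by (simp only: C_def ac_simps)
    also have "t powr (- (p + q)) * t powr (p + 1 - \<eta> + (q + 1 - \<theta>) - 1) = t powr (1 - \<eta> - \<theta>)"
      by (simp add: powr_add[symmetric] algebra_simps)
    finally show ?thesis
      using C by (simp only: ennreal_mult'[symmetric])
  qed
  finally show ?thesis .
qed

lemma ball_in_annulus:
  fixes \<rho> :: real
  assumes "0 < \<rho>"
  obtains p :: "'a::euclidean_space"
  where "\<And>x. x \<in> ball p (\<rho>/4) \<Longrightarrow> \<rho>/4 < norm x \<and> norm x < \<rho>"
    and "0 < emeasure lborel (ball p (\<rho>/4))"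
proof -
  obtain p :: 'a where p: "norm p = \<rho>/2"
    using vector_choose_size[of "\<rho>/2"] assms by auto
  have "\<rho>/4 < norm x \<and> norm x < \<rho>" if "x \<in> ball p (\<rho>/4)" for x
  proof -
    have "norm (p - x) < \<rho>/4"
      using that by (simp add: dist_norm)
    then show ?thesis
      using p norm_triangle_ineq2[of p x] norm_triangle_ineq3[of x p] by (simp add: norm_minus_commute)
  qed
  moreover have "0 < emeasure lborel (ball p (\<rho>/4))"
    using content_ball_pos[of "\<rho>/4" p] assms emeasure_lborel_ball_finite[of p "\<rho>/4"]
    by (simp add: emeasure_eq_ennreal_measure less_top)
  ultimately show ?thesis
    using that by blast
qed

lemma borel_measurable_antimono_norm:
  fixes \<nu> :: "real \<Rightarrow> 'b::{linorder_topology, second_countable_topology}"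
  assumes "\<And>x y. 0 \<le> x \<Longrightarrow> x \<le> y \<Longrightarrow> \<nu> y \<le> \<nu> x"
  shows "(\<lambda>x::'a::real_normed_vector. \<nu> (norm x)) \<in> borel_measurable borel"
proof (rule borel_measurableI_greater)
  fix y
  have "is_interval {s. 0 \<le> s \<and> y < \<nu> s}"
    unfolding is_interval_1 using assms by (auto intro: less_le_trans)
  then have "{s. 0 \<le> s \<and> y < \<nu> s} \<in> sets borel"
    by (rule real_interval_borel_measurable)
  then have "norm -` {s. 0 \<le> s \<and> y < \<nu> s} \<inter> space borel \<in> sets (borel :: 'a measure)"
    by (intro measurable_sets[of norm]) auto
  moreover have "norm -` {s. 0 \<le> s \<and> y < \<nu> s} \<inter> space borel = {x \<in> space borel. y < \<nu> (norm (x::'a))}"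
    by auto
  ultimately show "{x \<in> space borel. y < \<nu> (norm (x::'a))} \<in> sets borel"
    by simp
qed

definition lower_scaling_near_zero :: "(real \<Rightarrow> real) \<Rightarrow> real \<Rightarrow> real \<Rightarrow> bool" where
  "lower_scaling_near_zero f \<alpha> C \<longleftrightarrow>
     (\<forall>lam r. 0 < lam \<longrightarrow> lam \<le> 1 \<longrightarrow> 0 < r \<longrightarrow> r \<le> 1 \<longrightarrow> f r \<le> C * lam powr \<alpha> * f (lam * r))"

lemma lower_scaling_near_zeroD:
  "lower_scaling_near_zero f \<alpha> C \<Longrightarrow> 0 < lam \<Longrightarrow> lam \<le> 1 \<Longrightarrow> 0 < r \<Longrightarrow> r \<le> 1
    \<Longrightarrow> f r \<le> C * lam powr \<alpha> * f (lam * r)"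
  unfolding lower_scaling_near_zero_def by blast

text \<open>The parameter Rd only records the ambient space R^d, which \<nu> alone does not determine.\<close>

locale radial_levy_density =
  fixes Rd :: "'a::euclidean_space itself" and \<nu> :: "real \<Rightarrow> ennreal"
  assumes nu_mono: "\<And>x y. 0 \<le> x \<Longrightarrow> x \<le> y \<Longrightarrow> \<nu> y \<le> \<nu> x"
    and nu_int: "(\<integral>\<^sup>+ x. ennreal (min 1 (norm (x::'a::euclidean_space)^2)) * \<nu> (norm x) \<partial>lborel) < \<infinity>"
    and h0: "filterlim (h_fun Rd \<nu>) at_top (at_right 0)"
begin

abbreviation h :: "real \<Rightarrow> real" where
  "h \<equiv> h_fun Rd \<nu>"

abbreviation hinv :: "real \<Rightarrow> real" where
  "hinv \<equiv> h_inv Rd \<nu>"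

definition h_integrand :: "real \<Rightarrow> 'a \<Rightarrow> ennreal" where
  "h_integrand r x = ennreal (min 1 (norm x^2 / r^2)) * \<nu> (norm x)"

lemma nu_norm_measurable [measurable]: "(\<lambda>x::'a. \<nu> (norm x)) \<in> borel_measurable borel"
  using nu_mono by (rule borel_measurable_antimono_norm)

lemma h_integrand_measurable [measurable]: "h_integrand r \<in> borel_measurable lborel"
  unfolding h_integrand_def by measurable

lemma h_integrand_antimono:
  assumes "0 < s" "s \<le> r"
  shows "h_integrand r x \<le> h_integrand s x"
proof -
  have "norm x^2 / r^2 \<le> norm x^2 / s^2"
    using assms by (intro divide_left_mono power_mono) auto
  then show ?thesis
    unfolding h_integrand_def by (intro mult_right_mono) auto
qed

lemma nn_integral_h_integrand_finite:
  assumes "0 < r"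
  shows "(\<integral>\<^sup>+ x. h_integrand r x \<partial>lborel) < \<infinity>"
proof -
  define M where "M = max 1 (1/r^2)"
  have "h_integrand r x \<le> ennreal M * (ennreal (min 1 (norm x^2)) * \<nu> (norm x))" for x :: 'a
  proof -
    have "min 1 (norm x^2 / r^2) \<le> M * min 1 (norm x^2)"
    proof (cases "norm x^2 \<le> 1")
      case True
      have "norm x^2 / r^2 = (1/r^2) * norm x^2"
        by simp
      also have "\<dots> \<le> M * norm x^2"
        unfolding M_def by (intro mult_right_mono) auto
      finally have "norm x^2 / r^2 \<le> M * norm x^2" .
      then show ?thesis using True by auto
    qed (auto simp: M_def)
    then have "ennreal (min 1 (norm x^2 / r^2)) \<le> ennreal M * ennreal (min 1 (norm x^2))"
      by (simp add: M_def ennreal_mult'[symmetric])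
    then show ?thesis
      unfolding h_integrand_def mult.assoc[symmetric] by (intro mult_right_mono) auto
  qed
  then have "(\<integral>\<^sup>+ x. h_integrand r x \<partial>lborel)
      \<le> ennreal M * (\<integral>\<^sup>+ x. ennreal (min 1 (norm (x::'a)^2)) * \<nu> (norm x) \<partial>lborel)"
    by (subst nn_integral_cmult[symmetric]) (auto intro: nn_integral_mono)
  also have "\<dots> < \<infinity>"
    using nu_int by (simp add: ennreal_mult_less_top)
  finally show ?thesis .
qed

lemma h_nonneg: "0 \<le> h r"
  by (simp add: h_fun_def)

lemma ennreal_h: "0 < r \<Longrightarrow> ennreal (h r) = (\<integral>\<^sup>+ x. h_integrand r x \<partial>lborel)"
  using nn_integral_h_integrand_finite[of r] by (simp add: h_fun_def h_integrand_def less_top)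

lemma h_antimono:
  assumes "0 < s" "s \<le> r"
  shows "h r \<le> h s"
proof -
  have "(\<integral>\<^sup>+ x. h_integrand r x \<partial>lborel) \<le> (\<integral>\<^sup>+ x. h_integrand s x \<partial>lborel)"
    using h_integrand_antimono[OF assms] by (rule nn_integral_mono)
  then show ?thesis
    using assms by (simp add: ennreal_h[symmetric] h_nonneg)
qed

lemma sq_times_h_mono:
  assumes "0 < s" "s \<le> r"
  shows "s^2 * h s \<le> r^2 * h r"
proof -
  have "ennreal (s^2) * h_integrand s x \<le> ennreal (r^2) * h_integrand r x" for x :: 'a
  proof -
    have "s^2 * min 1 (norm x^2 / s^2) = min (s^2) (norm x^2)"
      "r^2 * min 1 (norm x^2 / r^2) = min (r^2) (norm x^2)"
      using assms by (simp_all add: min_def field_simps)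
    moreover have "s^2 \<le> r^2"
      using assms by (intro power_mono) auto
    ultimately have "ennreal (s^2) * ennreal (min 1 (norm x^2 / s^2))
        \<le> ennreal (r^2) * ennreal (min 1 (norm x^2 / r^2))"
      by (simp add: ennreal_mult'[symmetric])
    then show ?thesis
      unfolding h_integrand_def mult.assoc[symmetric] by (intro mult_right_mono) auto
  qed
  then have "ennreal (s^2) * ennreal (h s) \<le> ennreal (r^2) * ennreal (h r)"
    using assms by (simp add: ennreal_h nn_integral_cmult[symmetric] nn_integral_mono)
  then show ?thesis
    by (simp add: ennreal_mult'[symmetric] h_nonneg)
qed

lemma nu_pos_near_zero:
  assumes "0 < s"
  shows "\<exists>\<rho>. 0 < \<rho> \<and> \<rho> < s \<and> 0 < \<nu> \<rho>"
proof (rule ccontr)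
  assume "\<not> ?thesis"
  then have "\<nu> \<rho> = 0" if "0 < \<rho>" for \<rho>
    using nu_mono[of "min \<rho> (s/2)" \<rho>] that assms by (fastforce simp: min_def split: if_splits)
  then have "h_integrand r x = 0" for r and x :: 'a
    unfolding h_integrand_def by (cases "x = 0") auto
  then have "h r = 0" for r
    by (simp add: h_fun_def h_integrand_def[symmetric])
  moreover have "\<forall>\<^sub>F r in at_right 0. 1 \<le> h r"
    using h0 by (simp add: filterlim_at_top)
  ultimately show False
    using trivial_limit_at_right_real by (auto dest: eventually_happens')
qed

lemma nu_finite:
  assumes "0 < \<rho>"
  shows "\<nu> \<rho> < \<infinity>"
proof (rule ccontr)
  assume "\<not> ?thesis"
  then have inf: "\<nu> \<rho> = \<infinity>"
    by (simp add: less_top[symmetric])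
  obtain p :: 'a where p: "\<And>x. x \<in> ball p (\<rho>/4) \<Longrightarrow> \<rho>/4 < norm x \<and> norm x < \<rho>"
    and pos: "0 < emeasure lborel (ball p (\<rho>/4))"
    using ball_in_annulus[OF assms] by blast
  have "\<infinity> = (\<integral>\<^sup>+ x. \<infinity> * indicator (ball p (\<rho>/4)) x \<partial>lborel)"
    using pos by (subst nn_integral_cmult_indicator) (auto simp: ennreal_top_mult)
  also have "\<dots> \<le> (\<integral>\<^sup>+ x. ennreal (min 1 (norm (x::'a)^2)) * \<nu> (norm x) \<partial>lborel)"
  proof (intro nn_integral_mono)
    fix x :: 'a
    show "\<infinity> * indicator (ball p (\<rho>/4)) x \<le> ennreal (min 1 (norm x^2)) * \<nu> (norm x)"
    proof (cases "x \<in> ball p (\<rho>/4)")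
      case True
      with p have x: "\<rho>/4 < norm x" "norm x < \<rho>"
        by auto
      then have "\<nu> (norm x) = \<infinity>"
        using nu_mono[of "norm x" \<rho>] inf by (simp add: top_unique)
      moreover have "0 < norm x"
        using x assms by linarith
      then have "ennreal (min 1 (norm x^2)) \<noteq> 0"
        by (simp add: min_def)
      ultimately show ?thesis
        by (simp add: ennreal_mult_top del: ennreal_eq_0_iff)
    qed simp
  qed
  finally show False
    using nu_int by simp
qed

lemma h_integrand_diff:
  assumes "0 < s" "s \<le> r" "norm x \<le> s"
  shows "h_integrand r x + ennreal (norm x^2 * (1/s^2 - 1/r^2)) * \<nu> (norm x) = h_integrand s x"
proof -
  have "norm x^2 \<le> s^2" "s^2 \<le> r^2" "norm x^2 / r^2 \<le> norm x^2 / s^2"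
    using assms by (auto intro: power_mono divide_left_mono)
  then have "min 1 (norm x^2 / s^2) = norm x^2 / r^2 + norm x^2 * (1/s^2 - 1/r^2)"
    "min 1 (norm x^2 / r^2) = norm x^2 / r^2" "0 \<le> norm x^2 * (1/s^2 - 1/r^2)"
    using assms by (simp_all add: algebra_simps)
  then show ?thesis
    unfolding h_integrand_def by (simp add: ennreal_plus[symmetric] distrib_right[symmetric] del: ennreal_plus)
qed

lemma h_integrand_add_le:
  assumes "0 < s" "s \<le> r" "norm x \<le> s" "0 \<le> k" "ennreal k \<le> \<nu> (norm x)"
  shows "h_integrand r x + ennreal (norm x^2 * (1/s^2 - 1/r^2) * k) \<le> h_integrand s x"
proof -
  have "1/r^2 \<le> 1/s^2"
    using assms by (intro divide_left_mono power_mono) auto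
  then have "ennreal (norm x^2 * (1/s^2 - 1/r^2) * k) \<le> ennreal (norm x^2 * (1/s^2 - 1/r^2)) * \<nu> (norm x)"
    using assms by (subst ennreal_mult') (auto intro: mult_left_mono)
  then have "h_integrand r x + ennreal (norm x^2 * (1/s^2 - 1/r^2) * k)
      \<le> h_integrand r x + ennreal (norm x^2 * (1/s^2 - 1/r^2)) * \<nu> (norm x)"
    by (rule add_left_mono)
  also have "\<dots> = h_integrand s x"
    using assms(1-3) by (rule h_integrand_diff)
  finally show ?thesis .
qed

lemma h_strict_antimono:
  assumes "0 < s" "s < r"
  shows "h r < h s"
proof -
  obtain \<rho> where \<rho>: "0 < \<rho>" "\<rho> < s" "0 < \<nu> \<rho>"
    using nu_pos_near_zero[OF assms(1)] by blast
  define k where "k = enn2real (\<nu> \<rho>)"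
  have k: "ennreal k = \<nu> \<rho>" "0 < k"
    using nu_finite[OF \<rho>(1)] \<rho>(3) by (auto simp: k_def less_top enn2real_positive_iff)
  obtain p :: 'a where p: "\<And>x. x \<in> ball p (\<rho>/4) \<Longrightarrow> \<rho>/4 < norm x \<and> norm x < \<rho>"
    and B_pos: "0 < emeasure lborel (ball p (\<rho>/4))"
    using ball_in_annulus[OF \<rho>(1)] by blast
  define B where "B = ball p (\<rho>/4)"
  define c where "c = (\<rho>/4)^2 * (1/s^2 - 1/r^2) * k"
  have sr: "1/r^2 < 1/s^2"
    using assms by (intro divide_strict_left_mono power_strict_mono) auto
  then have c: "0 < c"
    unfolding c_def using k \<rho> by auto
  have pointwise: "h_integrand r x + ennreal c * indicator B x \<le> h_integrand s x" for x
  proof (cases "x \<in> B")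
    case True
    with p have x: "\<rho>/4 < norm x" "norm x < \<rho>"
      unfolding B_def by auto
    have "c \<le> norm x^2 * (1/s^2 - 1/r^2) * k"
      unfolding c_def using x sr k by (intro mult_right_mono power_mono) auto
    then have "h_integrand r x + ennreal c \<le> h_integrand r x + ennreal (norm x^2 * (1/s^2 - 1/r^2) * k)"
      by (intro add_left_mono ennreal_leI)
    also have "\<dots> \<le> h_integrand s x"
      using assms x \<rho> k nu_mono[of "norm x" \<rho>] by (intro h_integrand_add_le) auto
    finally show ?thesis
      using True by simp
  next
    case False
    then show ?thesis
      using h_integrand_antimono[of s r x] assms by simp
  qed
  have [measurable]: "B \<in> sets borel"
    by (simp add: B_def)
  have "(\<integral>\<^sup>+ x. h_integrand r x \<partial>lborel) + ennreal c * emeasure lborel B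
      = (\<integral>\<^sup>+ x. h_integrand r x + ennreal c * indicator B x \<partial>lborel)"
    by (subst nn_integral_add) (auto simp: nn_integral_cmult_indicator)
  also have "\<dots> \<le> (\<integral>\<^sup>+ x. h_integrand s x \<partial>lborel)"
    by (intro nn_integral_mono pointwise)
  finally have "(\<integral>\<^sup>+ x. h_integrand r x \<partial>lborel) + ennreal c * emeasure lborel B
      \<le> (\<integral>\<^sup>+ x. h_integrand s x \<partial>lborel)" .
  then have "ennreal (h r) + ennreal c * emeasure lborel B \<le> ennreal (h s)"
    using assms by (simp add: ennreal_h)
  moreover have "0 < ennreal c * emeasure lborel B"
    using c B_pos by (simp add: B_def ennreal_zero_less_mult_iff)
  then have "ennreal (h r) < ennreal (h r) + ennreal c * emeasure lborel B"
    by (simp add: ennreal_add_left_cancel_less)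
  ultimately have "ennreal (h r) < ennreal (h s)"
    by (rule order.strict_trans2[rotated])
  then show ?thesis
    by (simp add: ennreal_less_iff h_nonneg)
qed

lemma isCont_h:
  assumes "0 < x"
  shows "isCont h x"
proof -
  let ?L = "\<lambda>y. h x * min 1 ((x/y)^2)" and ?U = "\<lambda>y. h x * max 1 ((x/y)^2)"
  have sandwich: "?L y \<le> h y \<and> h y \<le> ?U y" if y: "0 < y" for y
  proof (cases "y \<le> x")
    case True
    have "(x/y)^2 \<ge> 1"
      using True y by (simp add: one_le_power)
    moreover have "h y \<le> h x * (x/y)^2"
      using sq_times_h_mono[OF y True] y by (simp add: field_simps power_divide)
    ultimately show ?thesis
      using h_antimono[OF y True] by (simp add: min_def max_def)
  next
    case False
    then have "(x/y)^2 \<le> 1"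
      using y assms by (simp add: power_le_one)
    moreover have "h x * (x/y)^2 \<le> h y"
      using sq_times_h_mono[OF assms] False y by (simp add: field_simps power_divide)
    ultimately show ?thesis
      using h_antimono[OF assms] False by (simp add: min_def max_def)
  qed
  have "(?L \<longlongrightarrow> h x * min 1 ((x/x)^2)) (at x)" "(?U \<longlongrightarrow> h x * max 1 ((x/x)^2)) (at x)"
    using assms by (intro tendsto_intros; simp)+
  then have L: "(?L \<longlongrightarrow> h x) (at x)" and U: "(?U \<longlongrightarrow> h x) (at x)"
    using assms by simp_all
  have pos: "\<forall>\<^sub>F y in at x. 0 < y"
    using order_tendstoD(1)[OF tendsto_ident_at assms] .
  have "(h \<longlongrightarrow> h x) (at x)"
    by (rule tendsto_sandwich[OF _ _ L U]) (use pos sandwich in \<open>auto elim: eventually_mono\<close>)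
  then show ?thesis
    by (simp add: isCont_def)
qed

lemma ex_h_less:
  assumes "0 < y"
  shows "\<exists>r>0. h r < y"
proof -
  define f where "f i = h_integrand (real (Suc i))" for i
  have dec: "decseq f"
    unfolding f_def by (intro decseq_SucI le_funI h_integrand_antimono) auto
  have lim: "(INF i. f i x) = 0" for x :: 'a
  proof (cases "x = 0")
    case True
    then show ?thesis
      by (simp add: f_def h_integrand_def)
  next
    case False
    have "(\<lambda>i. norm x^2 * inverse (real (Suc i)) * inverse (real (Suc i))) \<longlonglongrightarrow> norm x^2 * 0 * 0"
      by (intro tendsto_mult tendsto_const LIMSEQ_inverse_real_of_nat)
    then have "(\<lambda>i. min 1 (norm x^2 / (real (Suc i))^2)) \<longlonglongrightarrow> min 1 0"
      by (intro tendsto_min tendsto_const) (simp add: power2_eq_square divide_inverse mult.assoc)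
    then have "(\<lambda>i. \<nu> (norm x) * ennreal (min 1 (norm x^2 / (real (Suc i))^2))) \<longlonglongrightarrow> \<nu> (norm x) * ennreal 0"
      using nu_finite[of "norm x"] False by (intro ennreal_tendsto_cmult tendsto_ennrealI) auto
    then have "(\<lambda>i. f i x) \<longlonglongrightarrow> 0"
      by (simp add: f_def h_integrand_def mult.commute)
    moreover have "(\<lambda>i. f i x) \<longlonglongrightarrow> (INF i. f i x)"
      using dec by (intro LIMSEQ_INF) (simp add: monotone_on_def le_fun_def)
    ultimately show ?thesis
      using LIMSEQ_unique by blast
  qed
  have "(INF i. integral\<^sup>N lborel (f i)) = (\<integral>\<^sup>+ x. (INF i. f i x) \<partial>lborel)"
    by (rule nn_integral_monotone_convergence_INF_decseq[where i = 0, symmetric, OF dec])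
      (use nn_integral_h_integrand_finite[of 1] in \<open>simp_all add: f_def\<close>)
  also have "\<dots> < ennreal y"
    using assms by (simp add: lim)
  finally obtain i where "integral\<^sup>N lborel (f i) < ennreal y"
    by (auto simp: INF_less_iff)
  then have "h (real (Suc i)) < y"
    using assms by (simp add: f_def ennreal_h[symmetric] ennreal_less_iff h_nonneg)
  then show ?thesis
    by (intro exI[of _ "real (Suc i)"]) auto
qed

lemma h_inv_spec:
  assumes "0 < y"
  shows "0 < hinv y" "h (hinv y) = y"
proof -
  have "\<forall>\<^sub>F z in at_right 0. y \<le> h z"
    using h0 by (simp add: filterlim_at_top)
  then obtain b :: real where b: "0 < b" "\<And>z. 0 < z \<Longrightarrow> z < b \<Longrightarrow> y \<le> h z"
    by (auto simp: eventually_at_right_field)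
  then have a: "0 < b/2" "y \<le> h (b/2)"
    by auto
  obtain r where r: "0 < r" "h r < y"
    using ex_h_less[OF assms] by blast
  have "b/2 \<le> r"
  proof (rule ccontr)
    assume "\<not> b/2 \<le> r"
    then show False
      using h_antimono[OF r(1), of "b/2"] a r by simp
  qed
  moreover have "continuous_on {b/2..r} h"
    using a by (intro continuous_at_imp_continuous_on ballI isCont_h) auto
  ultimately obtain z where z: "b/2 \<le> z" "z \<le> r" "h z = y"
    using IVT2'[of h r y "b/2"] r(2) a(2) by force
  then have "0 < z"
    using b(1) by linarith
  have "hinv y = z"
    unfolding h_inv_def
  proof (rule the_equality)
    show "0 < z \<and> h z = y"
      using \<open>0 < z\<close> z(3) by simp
    show "w = z" if w: "0 < w \<and> h w = y" for w
    proof (rule linorder_cases[of w z])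
      assume "w < z"
      then show ?thesis
        using h_strict_antimono[of w z] w z(3) by simp
    next
      assume "z < w"
      then show ?thesis
        using h_strict_antimono[of z w] w z(3) \<open>0 < z\<close> by simp
    qed
  qed
  then show "0 < hinv y" "h (hinv y) = y"
    using \<open>0 < z\<close> z(3) by simp_all
qed

lemma h_inv_antimono:
  assumes "0 < u" "u \<le> t"
  shows "hinv (1/u) \<le> hinv (1/t)"
proof (cases "u = t")
  case False
  then have "1/t < 1/u"
    using assms by (simp add: frac_less2)
  show ?thesis
  proof (rule ccontr)
    assume "\<not> ?thesis"
    then have "h (hinv (1/u)) \<le> h (hinv (1/t))"
      using assms h_inv_spec(1)[of "1/t"] by (intro h_antimono) auto
    with \<open>1/t < 1/u\<close> show False
      using assms by (simp add: h_inv_spec(2))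
  qed
qed simp

lemma h_inv_sq_le:
  assumes "0 < u" "u \<le> t"
  shows "hinv (1/u)^2 \<le> hinv (1/t)^2 * (u/t)"
proof -
  have "hinv (1/u)^2 * h (hinv (1/u)) \<le> hinv (1/t)^2 * h (hinv (1/t))"
    using assms by (intro sq_times_h_mono h_inv_antimono) (simp_all add: h_inv_spec(1))
  then have "hinv (1/u)^2 * (1/u) \<le> hinv (1/t)^2 * (1/t)"
    using assms by (simp add: h_inv_spec(2))
  then show ?thesis
    using assms by (simp add: field_simps)
qed

lemma h_inv_powr_le:
  assumes "0 < u" "u \<le> t" "0 \<le> \<gamma>"
  shows "hinv (1/u) powr \<gamma> \<le> hinv (1/t) powr \<gamma> * (u/t) powr (\<gamma>/2)"
proof -
  have pos: "0 < hinv (1/u)" "0 < hinv (1/t)"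
    using assms by (simp_all add: h_inv_spec(1))
  have "hinv (1/u) powr \<gamma> = (hinv (1/u) powr 2) powr (\<gamma>/2)"
    by (simp add: powr_powr)
  also have "\<dots> \<le> (hinv (1/t)^2 * (u/t)) powr (\<gamma>/2)"
    using h_inv_sq_le[OF assms(1,2)] assms pos by (intro powr_mono2) (auto simp: powr_numeral)
  also have "\<dots> = (hinv (1/t) powr 2) powr (\<gamma>/2) * (u/t) powr (\<gamma>/2)"
    using pos assms by (subst powr_mult) (auto simp: powr_numeral)
  also have "(hinv (1/t) powr 2) powr (\<gamma>/2) = hinv (1/t) powr \<gamma>"
    by (simp add: powr_powr)
  finally show ?thesis .
qed

lemma h_inv_powr_ge_scaling_small:
  assumes S: "lower_scaling_near_zero h \<alpha> C" and "0 < C" and u: "0 < u" "u \<le> t" and small: "hinv (1/t) \<le> 1"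
  shows "hinv (1/t) powr \<alpha> * (u / (C * t)) \<le> hinv (1/u) powr \<alpha>"
proof -
  define a b where "a = hinv (1/u)" and "b = hinv (1/t)"
  have a: "0 < a" "h a = 1/u" and b: "0 < b" "h b = 1/t" "a \<le> b"
    using u h_inv_antimono[OF u] by (simp_all add: a_def b_def h_inv_spec)
  have "h b \<le> C * (a/b) powr \<alpha> * h (a/b * b)"
    using a b small by (intro lower_scaling_near_zeroD[OF S]) (simp_all add: b_def)
  then have "1/t \<le> C * (a powr \<alpha> / b powr \<alpha>) * (1/u)"
    using a b by (simp add: powr_divide)
  then show ?thesis
    using u b \<open>0 < C\<close> by (simp add: a_def b_def field_simps)
qed

lemma h_inv_powr_ge_scaling_large:
  assumes S: "lower_scaling_near_zero h \<alpha> C" and "0 < \<alpha>" "1 \<le> C"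
    and u: "0 < u" "u \<le> t" and large: "1 < hinv (1/t)"
  shows "u / (C * t) \<le> hinv (1/u) powr \<alpha>"
proof (cases "hinv (1/u) \<le> 1")
  case True
  have "h 1 \<le> C * hinv (1/u) powr \<alpha> * h (hinv (1/u) * 1)"
    using True u h_inv_spec(1)[of "1/u"] by (intro lower_scaling_near_zeroD[OF S]) simp_all
  moreover have "h (hinv (1/t)) \<le> h 1"
    using large by (intro h_antimono) auto
  ultimately have "1/t \<le> C * hinv (1/u) powr \<alpha> * (1/u)"
    using u by (simp add: h_inv_spec(2))
  then show ?thesis
    using u assms(3) by (simp add: field_simps)
next
  case False
  have "0 < t"
    using u by linarith
  then have "t \<le> C * t"
    using assms(3) by simp
  then have "u \<le> C * t"
    using u by linarith
  then have "u / (C * t) \<le> 1"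
    using u assms(3) by simp
  moreover have "1 < hinv (1/u) powr \<alpha>"
    using False assms(2) by simp
  ultimately show ?thesis
    by linarith
qed

lemma h_inv_powr_ge_scaling:
  assumes S: "lower_scaling_near_zero h \<alpha> C" and \<alpha>: "0 < \<alpha>" "\<alpha> \<le> 2" and C: "1 \<le> C"
    and u: "0 < u" "u \<le> t" and tT: "t \<le> T"
  shows "hinv (1/t) powr \<alpha> * (u / (C * (max (hinv (1/T)) 1)^2 * t)) \<le> hinv (1/u) powr \<alpha>"
proof -
  define M where "M = max (hinv (1/T)) 1"
  have M: "1 \<le> M" "hinv (1/t) \<le> M"
    using u tT h_inv_antimono[of t T] by (auto simp: M_def)
  have "u / (C * M^2 * t) \<le> u / (C * t)"
    using u C M by (intro divide_left_mono) (auto simp: one_le_power)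
  then have "hinv (1/t) powr \<alpha> * (u / (C * M^2 * t)) \<le> hinv (1/t) powr \<alpha> * (u / (C * t))"
    by (rule mult_left_mono) simp
  also have "\<dots> \<le> hinv (1/u) powr \<alpha>" if "hinv (1/t) \<le> 1"
    using h_inv_powr_ge_scaling_small[OF S _ u that] C by simp
  finally have small: "?thesis" if "hinv (1/t) \<le> 1"
    using that by (simp add: M_def)
  have "0 < hinv (1/t)"
    using u by (simp add: h_inv_spec(1))
  then have "hinv (1/t) powr \<alpha> \<le> M powr 2"
    using M \<alpha> by (meson order.trans powr_mono powr_mono2 less_imp_le)
  then have "hinv (1/t) powr \<alpha> * (u / (C * M^2 * t)) \<le> M^2 * (u / (C * M^2 * t))"
    using u C M by (intro mult_right_mono) (auto simp: powr_numeral)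
  also have "\<dots> = u / (C * t)"
    using M by (simp add: field_simps)
  also have "\<dots> \<le> hinv (1/u) powr \<alpha>" if "1 < hinv (1/t)"
    using h_inv_powr_ge_scaling_large[OF S \<alpha>(1) C u that] .
  finally have large: "?thesis" if "1 < hinv (1/t)"
    using that by (simp add: M_def)
  show ?thesis
    using small large by linarith
qed

lemma h_inv_powr_le_scaling:
  assumes S: "lower_scaling_near_zero h \<alpha> C" and \<alpha>: "0 < \<alpha>" "\<alpha> \<le> 2" and C: "1 \<le> C"
    and u: "0 < u" "u \<le> t" and tT: "t \<le> T"
  shows "hinv (1/u) powr \<gamma> \<le> (C * (max (hinv (1/T)) 1)^2) powr (- min \<gamma> 0 / \<alpha>) * hinv (1/t) powr \<gamma>
      * (u/t) powr (min (\<gamma>/2) (\<gamma>/\<alpha>))"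
proof (cases "0 \<le> \<gamma>")
  case True
  moreover have "\<gamma>/2 \<le> \<gamma>/\<alpha>"
    using True \<alpha> by (intro divide_left_mono) auto
  ultimately have exponents: "min \<gamma> 0 = 0" "min (\<gamma>/2) (\<gamma>/\<alpha>) = \<gamma>/2"
    by simp_all
  have "(C * (max (hinv (1/T)) 1)^2) powr (- min \<gamma> 0 / \<alpha>) = 1"
    using C unfolding exponents by simp
  then show ?thesis
    unfolding exponents using h_inv_powr_le[OF u True] by simp
next
  case False
  define K where "K = C * (max (hinv (1/T)) 1)^2"
  have "0 < K"
    using C by (simp add: K_def)
  have "\<gamma>/\<alpha> \<le> \<gamma>/2"
    using False \<alpha> by (intro divide_left_mono_neg) auto
  then have "min \<gamma> 0 = \<gamma>" "min (\<gamma>/2) (\<gamma>/\<alpha>) = \<gamma>/\<alpha>"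
    using False by simp_all
  moreover have "hinv (1/u) powr \<gamma> \<le> K powr (- \<gamma> / \<alpha>) * hinv (1/t) powr \<gamma> * (u/t) powr (\<gamma>/\<alpha>)"
  proof -
    have lower: "hinv (1/t) powr \<alpha> * (u / (K * t)) \<le> hinv (1/u) powr \<alpha>"
      using h_inv_powr_ge_scaling[OF S \<alpha> C u tT] unfolding K_def .
    have "0 < hinv (1/t) powr \<alpha> * (u / (K * t))"
      using h_inv_spec(1)[of "1/t"] u \<open>0 < K\<close> by simp
    moreover have "\<gamma>/\<alpha> \<le> 0"
      using False \<alpha> by (simp add: divide_nonpos_pos)
    ultimately have "(hinv (1/u) powr \<alpha>) powr (\<gamma>/\<alpha>) \<le> (hinv (1/t) powr \<alpha> * (u / (K * t))) powr (\<gamma>/\<alpha>)"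
      using lower by (intro powr_mono2')
    also have "\<dots> = hinv (1/t) powr \<gamma> * ((u/t) / K) powr (\<gamma>/\<alpha>)"
      using u \<alpha> \<open>0 < K\<close> by (subst powr_mult) (auto simp: powr_powr mult.commute)
    also have "((u/t) / K) powr (\<gamma>/\<alpha>) = K powr (- \<gamma> / \<alpha>) * (u/t) powr (\<gamma>/\<alpha>)"
      using u \<open>0 < K\<close> by (subst powr_divide) (simp_all add: powr_minus divide_inverse)
    finally show ?thesis
      using \<alpha> by (simp add: powr_powr ac_simps)
  qed
  ultimately show ?thesis
    by (simp add: K_def)
qed

lemma convolution_bound:
  assumes "0 < t" "0 \<le> \<beta>" "0 \<le> \<gamma>" "0 < \<beta>/2 + 1 - \<theta>" "0 < \<gamma>/2 + 1 - \<eta>"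
  shows "(\<integral>\<^sup>+ u \<in> {0<..<t}. ennreal (u powr (-\<eta>) * hinv (1/u) powr \<gamma> *
           (t - u) powr (-\<theta>) * hinv (1/(t - u)) powr \<beta>) \<partial>lborel)
      \<le> ennreal (Beta (\<beta>/2 + 1 - \<theta>) (\<gamma>/2 + 1 - \<eta>) * t powr (1 - \<eta> - \<theta>) * hinv (1/t) powr (\<gamma> + \<beta>))"
proof -
  have "(\<integral>\<^sup>+ u \<in> {0<..<t}. ennreal (u powr (-\<eta>) * hinv (1/u) powr \<gamma> *
           (t - u) powr (-\<theta>) * hinv (1/(t - u)) powr \<beta>) \<partial>lborel)
      \<le> ennreal (hinv (1/t) powr \<gamma> * hinv (1/t) powr \<beta> * Beta (\<gamma>/2 + 1 - \<eta>) (\<beta>/2 + 1 - \<theta>)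
          * t powr (1 - \<eta> - \<theta>))"
    using assms h_inv_powr_le
    by (intro nn_integral_convolution_le_Beta[where f = "\<lambda>u. hinv (1/u) powr \<gamma>" and g = "\<lambda>u. hinv (1/u) powr \<beta>"])
      auto
  then show ?thesis
    by (simp add: Beta_commute powr_add ac_simps)
qed

lemma convolution_bound_scaling:
  assumes S: "lower_scaling_near_zero h \<alpha> C" and \<alpha>: "0 < \<alpha>" "\<alpha> \<le> 2" and C: "1 \<le> C"
    and t: "0 < t" "t \<le> T"
    and "0 < min (\<beta>/2) (\<beta>/\<alpha>) + 1 - \<theta>" "0 < min (\<gamma>/2) (\<gamma>/\<alpha>) + 1 - \<eta>"
  shows "(\<integral>\<^sup>+ u \<in> {0<..<t}. ennreal (u powr (-\<eta>) * hinv (1/u) powr \<gamma> *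
           (t - u) powr (-\<theta>) * hinv (1/(t - u)) powr \<beta>) \<partial>lborel)
      \<le> ennreal ((C * (max (hinv (1/T)) 1)^2) powr (- (min \<beta> 0 + min \<gamma> 0) / \<alpha>) *
           Beta (min (\<beta>/2) (\<beta>/\<alpha>) + 1 - \<theta>) (min (\<gamma>/2) (\<gamma>/\<alpha>) + 1 - \<eta>) *
           t powr (1 - \<eta> - \<theta>) * hinv (1/t) powr (\<gamma> + \<beta>))"
proof -
  define K where "K = C * (max (hinv (1/T)) 1)^2"
  have "(\<integral>\<^sup>+ u \<in> {0<..<t}. ennreal (u powr (-\<eta>) * hinv (1/u) powr \<gamma> *
           (t - u) powr (-\<theta>) * hinv (1/(t - u)) powr \<beta>) \<partial>lborel)
      \<le> ennreal (K powr (- min \<gamma> 0 / \<alpha>) * hinv (1/t) powr \<gamma> * (K powr (- min \<beta> 0 / \<alpha>) * hinv (1/t) powr \<beta>)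
          * Beta (min (\<gamma>/2) (\<gamma>/\<alpha>) + 1 - \<eta>) (min (\<beta>/2) (\<beta>/\<alpha>) + 1 - \<theta>) * t powr (1 - \<eta> - \<theta>))"
    using assms h_inv_powr_le_scaling[OF S \<alpha> C _ _ t(2), folded K_def]
    by (intro nn_integral_convolution_le_Beta[where f = "\<lambda>u. hinv (1/u) powr \<gamma>" and g = "\<lambda>u. hinv (1/u) powr \<beta>"])
      auto
  moreover have "K powr (- (min \<beta> 0 + min \<gamma> 0) / \<alpha>) = K powr (- min \<gamma> 0 / \<alpha>) * K powr (- min \<beta> 0 / \<alpha>)"
  proof -
    have "- (min \<beta> 0 + min \<gamma> 0) / \<alpha> = - min \<gamma> 0 / \<alpha> + - min \<beta> 0 / \<alpha>"
      using \<alpha> by (simp add: field_simps)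
    then show ?thesis
      by (simp only: powr_add)
  qed
  ultimately show ?thesis
    by (simp add: K_def Beta_commute powr_add ac_simps)
qed

end

theorem mainTheorem16:
  fixes \<nu> :: "real \<Rightarrow> ennreal" and \<theta> \<eta> :: real
  assumes nu_mono: "\<And>x y. 0 \<le> x \<Longrightarrow> x \<le> y \<Longrightarrow> \<nu> y \<le> \<nu> x"
    and nu_int: "(\<integral>\<^sup>+ x. ennreal (min 1 (norm (x::'a::euclidean_space)^2)) * \<nu> (norm x) \<partial>lborel) < \<infinity>"
    and h0: "filterlim (h_fun TYPE('a) \<nu>) at_top (at_right 0)"
  shows
   "(\<forall>t \<beta> \<gamma>. 0 < t \<longrightarrow> \<beta> \<ge> 0 \<longrightarrow> \<gamma> \<ge> 0 \<longrightarrow> \<beta>/2 + 1 - \<theta> > 0 \<longrightarrow> \<gamma>/2 + 1 - \<eta> > 0 \<longrightarrow>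
      (\<integral>\<^sup>+ u \<in> {0<..<t}. ennreal (u powr (-\<eta>) * (h_inv TYPE('a) \<nu> (1/u)) powr \<gamma> *
           (t - u) powr (-\<theta>) * (h_inv TYPE('a) \<nu> (1/(t-u))) powr \<beta>) \<partial>lborel)
      \<le> ennreal (Beta (\<beta>/2 + 1 - \<theta>) (\<gamma>/2 + 1 - \<eta>) *
           t powr (1 - \<eta> - \<theta>) * (h_inv TYPE('a) \<nu> (1/t)) powr (\<gamma> + \<beta>)))
  \<and> (\<forall>\<alpha>\<^sub>h C\<^sub>h. 0 < \<alpha>\<^sub>h \<longrightarrow> \<alpha>\<^sub>h \<le> 2 \<longrightarrow> C\<^sub>h \<ge> 1 \<longrightarrow>
      (\<forall>lam r. 0 < lam \<longrightarrow> lam \<le> 1 \<longrightarrow> 0 < r \<longrightarrow> r \<le> 1 \<longrightarrow>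
          h_fun TYPE('a) \<nu> r \<le> C\<^sub>h * lam powr \<alpha>\<^sub>h * h_fun TYPE('a) \<nu> (lam * r)) \<longrightarrow>
      (\<forall>T t \<beta> \<gamma>. 0 < T \<longrightarrow> 0 < t \<longrightarrow> t \<le> T \<longrightarrow>
         min (\<beta>/2) (\<beta>/\<alpha>\<^sub>h) + 1 - \<theta> > 0 \<longrightarrow> min (\<gamma>/2) (\<gamma>/\<alpha>\<^sub>h) + 1 - \<eta> > 0 \<longrightarrow>
        (\<integral>\<^sup>+ u \<in> {0<..<t}. ennreal (u powr (-\<eta>) * (h_inv TYPE('a) \<nu> (1/u)) powr \<gamma> *
           (t - u) powr (-\<theta>) * (h_inv TYPE('a) \<nu> (1/(t-u))) powr \<beta>) \<partial>lborel)
        \<le> ennreal ((C\<^sub>h * (max (h_inv TYPE('a) \<nu> (1/T)) 1)^2) powr (-(min \<beta> 0 + min \<gamma> 0)/\<alpha>\<^sub>h) *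
             Beta (min (\<beta>/2) (\<beta>/\<alpha>\<^sub>h) + 1 - \<theta>) (min (\<gamma>/2) (\<gamma>/\<alpha>\<^sub>h) + 1 - \<eta>) *
             t powr (1 - \<eta> - \<theta>) * (h_inv TYPE('a) \<nu> (1/t)) powr (\<gamma> + \<beta>))))"
proof -
  interpret radial_levy_density "TYPE('a)" \<nu>
    using assms by unfold_locales
  show ?thesis
    using convolution_bound convolution_bound_scaling unfolding lower_scaling_near_zero_def
    by (intro conjI allI impI) (simp_all add: minus_divide_left)
qed

end
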